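(* Let $k\ge 3$. A binary linear $[N,k,D]$ Griesmer code $C$ is self-orthogonal if and only if $C$ is doubly-even.
   Context: A binary linear $[N,k,D]$ code is a Griesmer code if $N=\sum_{i=0}^{k-1}\lceil D/2^i\rceil$. A binary code is self-orthogonal if $C\subseteq C^\perp$ (standard inner product over $\mathbb{F}_2$). A binary code is doubly-even if every codeword has Hamming weight divisible by $4$. *)

theory Defs
  imports "HOL-Analysis.Analysis" "HOL-Library.Z2"
begin

definition hamming_weight :: "bit ^ 'n \<Rightarrow> nat" where
  "hamming_weight x = card {i. x $ i \<noteq> 0}"

definition hamming_dist :: "bit ^ 'n \<Rightarrow> bit ^ 'n \<Rightarrow> nat" where
  "hamming_dist x y = card {i. x $ i \<noteq> y $ i}"

definition bin_inner :: "bit ^ 'n \<Rightarrow> bit ^ 'n \<Rightarrow> bit" where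
  "bin_inner x y = (\<Sum>i\<in>UNIV. x $ i * y $ i)"

definition binary_linear_code :: "(bit ^ 'n) set \<Rightarrow> bool" where
  "binary_linear_code C \<longleftrightarrow> module.subspace ((*s) :: bit \<Rightarrow> bit ^ 'n \<Rightarrow> bit ^ 'n) C"

definition code_dim :: "(bit ^ 'n) set \<Rightarrow> nat" where
  "code_dim C = vector_space.dim ((*s) :: bit \<Rightarrow> bit ^ 'n \<Rightarrow> bit ^ 'n) C"

definition min_distance :: "(bit ^ 'n) set \<Rightarrow> nat" where
  "min_distance C = Min {hamming_dist x y | x y. x \<in> C \<and> y \<in> C \<and> x \<noteq> y}"

definition is_NkD_code :: "(bit ^ 'n) set \<Rightarrow> nat \<Rightarrow> nat \<Rightarrow> nat \<Rightarrow> bool" where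
  "is_NkD_code C N k D \<longleftrightarrow> binary_linear_code C \<and> N = CARD('n) \<and> code_dim C = k \<and> min_distance C = D"

definition griesmer :: "nat \<Rightarrow> nat \<Rightarrow> nat \<Rightarrow> bool" where
  "griesmer N k D \<longleftrightarrow> N = (\<Sum>i<k. nat \<lceil>real D / 2 ^ i\<rceil>)"

definition self_orthogonal :: "(bit ^ 'n) set \<Rightarrow> bool" where
  "self_orthogonal C \<longleftrightarrow> (\<forall>x\<in>C. \<forall>y\<in>C. bin_inner x y = 0)"

definition doubly_even :: "(bit ^ 'n) set \<Rightarrow> bool" where
  "doubly_even C \<longleftrightarrow> (\<forall>x\<in>C. 4 dvd hamming_weight x)"

end

(*
  Doubly-even codes are self-orthogonal because
  wt (x + y) = wt x + wt y - 2 |supp x \<inter> supp y|.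

  Conversely, in a self-orthogonal code all weights are even and
  wt (x + c) = wt x + wt c (mod 4).  Suppose some weight is 2 (mod 4) and let c be
  such a codeword of least weight w.  For every codeword x one of x and x + c has
  weight 2 (mod 4), hence weight at least w.  The only
  codewords supported inside supp c are 0 and c, so the residual code of C with respect
  to c (delete the coordinates in supp c) has dimension k - 1 and length N - w.  And
  wt x + wt (x + c) = w + 2 wt (residual of x) bounds the residual minimum weight from
  below by ceil (D / 2), and by ceil (D / 2) + 1 if w = D, since residual weights are
  even while D = 2 (mod 4).  Call this lower bound d'.  The Griesmer bound for the
  residual code gives g (k - 1, d') <= N - w, whereas N = D + g (k - 1, ceil (D / 2)):
  impossible, as w > D or d' > ceil (D / 2) and g (k - 1, _) is strictly increasing.
*)
theory Submission
  imports Defs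
begin

lemma bit_UNIV: "(UNIV :: bit set) = {0, 1}"
  by (auto intro: bit.exhaust)

instance bit :: finite
  by standard (simp add: bit_UNIV)

lemma bit_vec_add_self [simp]: "x + x = (0 :: bit ^ 'n)"
  by (simp add: vec_eq_iff)

lemma bit_vec_add_eq_0_iff: "x + y = (0 :: bit ^ 'n) \<longleftrightarrow> x = y"
  by (metis add.assoc add_0 bit_vec_add_self)

lemma bit_vec_add_eq_iff: "x + y = (z :: bit ^ 'n) \<longleftrightarrow> x = z + y"
  by (auto simp: add.assoc)

lemma of_nat_bit_eq_0_iff: "(of_nat n :: bit) = 0 \<longleftrightarrow> even n"
  by (induction n) auto

lemma subspace_bit_iff:
  "vec.subspace V \<longleftrightarrow> 0 \<in> V \<and> (\<forall>x\<in>V. \<forall>y\<in>V. x + y \<in> (V :: (bit ^ 'n) set))"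
proof -
  have "a *s x = 0 \<or> a *s x = x" for a :: bit and x :: "bit ^ 'n"
    by (cases a) auto
  then show ?thesis
    unfolding vec.subspace_def by metis
qed

definition support :: "bit ^ 'n \<Rightarrow> 'n set" where
  "support x = {i. x $ i \<noteq> 0}"

lemma support_eq_empty_iff [simp]: "support x = {} \<longleftrightarrow> x = 0"
  by (auto simp: support_def vec_eq_iff)

lemma support_zero [simp]: "support 0 = {}"
  by simp

lemma support_add: "support (x + y) = (support x - support y) \<union> (support y - support x)"
proof -
  have "a + b \<noteq> 0 \<longleftrightarrow> (a \<noteq> 0) \<noteq> (b \<noteq> 0)" for a b :: bit
    by (cases a; cases b) auto
  then show ?thesis
    by (auto simp: support_def)
qed

lemma hamming_weight_eq_card_support: "hamming_weight x = card (support x)"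
  by (simp add: hamming_weight_def support_def)

lemma hamming_weight_eq_0_iff [simp]: "hamming_weight x = 0 \<longleftrightarrow> x = 0"
  by (simp add: hamming_weight_eq_card_support)

lemma hamming_weight_zero [simp]: "hamming_weight 0 = 0"
  by simp

lemma hamming_weight_pos_iff [simp]: "0 < hamming_weight x \<longleftrightarrow> x \<noteq> 0"
  by (simp add: hamming_weight_eq_card_support card_gt_0_iff)

lemma hamming_weight_add:
  "hamming_weight (x + y) + 2 * card (support x \<inter> support y) = hamming_weight x + hamming_weight y"
proof -
  let ?A = "support x" and ?B = "support y"
  have "hamming_weight (x + y) = card (?A - ?B) + card (?B - ?A)"
    unfolding hamming_weight_eq_card_support support_add by (rule card_Un_disjoint) auto
  moreover have "card ?A = card (?A - ?B) + card (?A \<inter> ?B)" "card ?B = card (?B - ?A) + card (?A \<inter> ?B)"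
    by (simp_all add: card_Diff_subset_Int Int_commute card_mono)
  ultimately show ?thesis
    by (simp add: hamming_weight_eq_card_support)
qed

lemma bin_inner_eq_0_iff: "bin_inner x y = 0 \<longleftrightarrow> even (card (support x \<inter> support y))"
proof -
  have "bin_inner x y = (\<Sum>i\<in>support x \<inter> support y. 1)"
    unfolding bin_inner_def by (rule sum.mono_neutral_cong_right) (auto simp: support_def)
  also have "\<dots> = of_nat (card (support x \<inter> support y))"
    by simp
  finally show ?thesis
    by (simp add: of_nat_bit_eq_0_iff)
qed

lemma min_distance_le_hamming_weight:
  fixes C :: "(bit ^ 'n) set"
  assumes "0 \<in> C" "x \<in> C" "x \<noteq> 0"
  shows "min_distance C \<le> hamming_weight x"
proof -
  let ?S = "{hamming_dist x y | x y. x \<in> C \<and> y \<in> C \<and> x \<noteq> y}"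
  have "?S \<subseteq> {..CARD('n)}"
    unfolding hamming_dist_def by (auto intro: card_mono)
  then have "finite ?S"
    by (rule finite_subset) simp
  moreover have "hamming_dist x 0 \<in> ?S"
    using assms by auto
  ultimately have "Min ?S \<le> hamming_dist x 0"
    by (rule Min_le)
  then show ?thesis
    by (simp add: min_distance_def hamming_dist_def hamming_weight_def)
qed

lemma card_span_insert:
  fixes b :: "bit ^ 'n"
  assumes "b \<notin> vec.span B"
  shows "card (vec.span (insert b B)) = 2 * card (vec.span B)"
proof -
  have scale: "a *s b = 0 \<or> a *s b = b" for a :: bit
    by (cases a) auto
  have "vec.span (insert b B) = vec.span B \<union> (+) b ` vec.span B"
  proof (intro equalityI subsetI)
    fix x assume "x \<in> vec.span (insert b B)"
    then obtain a where "x - a *s b \<in> vec.span B"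
      by (auto simp: vec.span_breakdown_eq)
    then show "x \<in> vec.span B \<union> (+) b ` vec.span B"
      using scale[of a] by (auto simp: image_iff) (metis add.commute diff_add_cancel)
  next
    fix x assume "x \<in> vec.span B \<union> (+) b ` vec.span B"
    then show "x \<in> vec.span (insert b B)"
      by (auto intro: vec.span_add vec.span_base vec.span_mono[THEN subsetD, of B])
  qed
  moreover have "vec.span B \<inter> (+) b ` vec.span B = {}"
    using assms by (auto simp: vec.span_add_eq2)
  ultimately show ?thesis
    by (simp add: card_Un_disjoint card_image)
qed

lemma card_span_independent:
  fixes B :: "(bit ^ 'n) set"
  assumes "vec.independent B"
  shows "card (vec.span B) = 2 ^ card B"
proof -
  have "finite B"
    by simp
  then show ?thesis
    using assms
  proof (induction B rule: finite_induct)
    case empty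
    then show ?case
      by simp
  next
    case (insert b B)
    then show ?case
      by (simp add: vec.independent_insert card_span_insert)
  qed
qed

lemma card_subspace:
  fixes C :: "(bit ^ 'n) set"
  assumes "vec.subspace C"
  shows "card C = 2 ^ vec.dim C"
proof -
  obtain B where "B \<subseteq> C" "vec.independent B" "C \<subseteq> vec.span B" "card B = vec.dim C"
    by (rule vec.basis_exists)
  moreover from this assms have "vec.span B = C"
    by (simp add: vec.span_subspace)
  ultimately show ?thesis
    by (metis card_span_independent)
qed

section \<open>Self-orthogonality and weights modulo 4\<close>

lemma even_iff_four_dvd_double: "even (e::nat) \<longleftrightarrow> 4 dvd 2 * e"
  by presburger

lemma even_mod_four_cases: "even (a::nat) \<Longrightarrow> a mod 4 = 0 \<or> a mod 4 = 2"
  by presburger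

lemma half_le_iff_le_double: "(d + 1) div 2 \<le> (y::nat) \<longleftrightarrow> d \<le> 2 * y"
  by linarith

lemma even_half_lt_iff_lt_double: "even d \<Longrightarrow> (d + 1) div 2 < (y::nat) \<longleftrightarrow> d < 2 * y"
  by (elim evenE) simp

lemma doubly_even_imp_self_orthogonal:
  assumes "vec.subspace C" "doubly_even C"
  shows "self_orthogonal C"
  unfolding self_orthogonal_def bin_inner_eq_0_iff
proof (intro ballI)
  fix x y assume "x \<in> C" "y \<in> C"
  then have "4 dvd hamming_weight x" "4 dvd hamming_weight y" "4 dvd hamming_weight (x + y)"
    using assms by (auto simp: doubly_even_def subspace_bit_iff)
  then have "4 dvd hamming_weight (x + y) + 2 * card (support x \<inter> support y)"
    by (simp only: hamming_weight_add dvd_add)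
  then have "4 dvd 2 * card (support x \<inter> support y)"
    using \<open>4 dvd hamming_weight (x + y)\<close> by (simp add: dvd_add_right_iff)
  then show "even (card (support x \<inter> support y))"
    by (simp only: even_iff_four_dvd_double)
qed

lemma self_orthogonal_even_intersection:
  "self_orthogonal C \<Longrightarrow> x \<in> C \<Longrightarrow> y \<in> C \<Longrightarrow> even (card (support x \<inter> support y))"
  by (simp add: self_orthogonal_def bin_inner_eq_0_iff)

lemma self_orthogonal_even_weight:
  "self_orthogonal C \<Longrightarrow> x \<in> C \<Longrightarrow> even (hamming_weight x)"
  using self_orthogonal_even_intersection[of C x x] by (simp add: hamming_weight_eq_card_support)

lemma self_orthogonal_singly_even_add:
  assumes "self_orthogonal C" "x \<in> C" "c \<in> C" "hamming_weight c mod 4 = 2"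
  shows "hamming_weight x mod 4 = 2 \<or> hamming_weight (x + c) mod 4 = 2"
proof -
  have "4 dvd 2 * card (support x \<inter> support c)"
    using self_orthogonal_even_intersection[OF assms(1-3)] even_iff_four_dvd_double by blast
  then have "(hamming_weight (x + c) + 2 * card (support x \<inter> support c)) mod 4
      = hamming_weight (x + c) mod 4"
    by (metis add_0_right dvd_imp_mod_0 mod_add_right_eq)
  then have "hamming_weight (x + c) mod 4 = (hamming_weight x + hamming_weight c) mod 4"
    by (simp only: hamming_weight_add)
  then show ?thesis
    using even_mod_four_cases[OF self_orthogonal_even_weight[OF assms(1,2)]] assms(4)
    by (auto simp: mod_add_eq[symmetric])
qed

section \<open>Residual codes\<close>

(* The coordinates in supp c are zeroed rather than deleted, so residual codes stay in
   bit ^ 'n and their length is accounted for by the complement of supp c. *)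
definition puncture :: "bit ^ 'n \<Rightarrow> bit ^ 'n \<Rightarrow> bit ^ 'n" where
  "puncture c x = (\<chi> i. if i \<in> support c then 0 else x $ i)"

definition residual_code :: "(bit ^ 'n) set \<Rightarrow> bit ^ 'n \<Rightarrow> (bit ^ 'n) set" where
  "residual_code C c = puncture c ` C"

lemma support_puncture: "support (puncture c x) = support x - support c"
  by (auto simp: puncture_def support_def)

lemma puncture_zero [simp]: "puncture c 0 = 0"
  by (simp add: puncture_def vec_eq_iff)

lemma puncture_add: "puncture c (x + y) = puncture c x + puncture c y"
  by (simp add: puncture_def vec_eq_iff)

lemma puncture_eq_0_iff: "puncture c x = 0 \<longleftrightarrow> support x \<subseteq> support c"
  by (simp flip: support_eq_empty_iff add: support_puncture)

lemma puncture_neq_0_imp: "puncture c x \<noteq> 0 \<Longrightarrow> x \<noteq> 0 \<and> x + c \<noteq> 0"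
  by (auto simp: bit_vec_add_eq_0_iff puncture_eq_0_iff)

lemma hamming_weight_puncture:
  "hamming_weight (puncture c x) + card (support x \<inter> support c) = hamming_weight x"
  by (simp add: hamming_weight_eq_card_support support_puncture card_Diff_subset_Int card_mono)

lemma hamming_weight_add_puncture:
  "hamming_weight x + hamming_weight (x + c) = hamming_weight c + 2 * hamming_weight (puncture c x)"
  using hamming_weight_add[of x c] hamming_weight_puncture[of c x] by linarith

lemma subspace_residual_code: "vec.subspace C \<Longrightarrow> vec.subspace (residual_code C c)"
  unfolding subspace_bit_iff residual_code_def
  by (auto simp flip: puncture_add intro!: image_eqI[of 0 "puncture c" 0])

lemma card_le_twice_card_residual_code:
  assumes "vec.subspace C" "c \<in> C"
    and kernel: "\<And>z. z \<in> C \<Longrightarrow> support z \<subseteq> support c \<Longrightarrow> z = 0 \<or> z = c"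
  shows "card C \<le> 2 * card (residual_code C c)"
proof -
  have fibre: "{x \<in> C. puncture c x = y} \<subseteq> {x0, x0 + c}" if "x0 \<in> C" "y = puncture c x0" for x0 y
  proof
    fix x assume x: "x \<in> {x \<in> C. puncture c x = y}"
    then have "x + x0 \<in> C" "puncture c (x + x0) = 0"
      using assms(1) that by (auto simp: subspace_bit_iff puncture_add)
    then have "x + x0 = 0 \<or> x + x0 = c"
      using kernel puncture_eq_0_iff by blast
    then show "x \<in> {x0, x0 + c}"
      using bit_vec_add_eq_iff[of x x0] by (auto simp: add.commute)
  qed
  have "(\<Union>y\<in>residual_code C c. {x \<in> C. puncture c x = y}) = C"
    by (auto simp: residual_code_def)
  moreover have "card (\<Union>y\<in>residual_code C c. {x \<in> C. puncture c x = y})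
      \<le> (\<Sum>y\<in>residual_code C c. card {x \<in> C. puncture c x = y})"
    by (rule card_UN_le) simp
  ultimately have "card C \<le> (\<Sum>y\<in>residual_code C c. card {x \<in> C. puncture c x = y})"
    by simp
  also have "\<dots> \<le> (\<Sum>y\<in>residual_code C c. 2)"
  proof (rule sum_mono)
    fix y assume "y \<in> residual_code C c"
    then obtain x0 where "x0 \<in> C" "y = puncture c x0"
      by (auto simp: residual_code_def)
    then have "card {x \<in> C. puncture c x = y} \<le> card {x0, x0 + c}"
      using fibre by (intro card_mono) auto
    also have "\<dots> \<le> 2"
      by (simp add: card_insert_le_m1)
    finally show "card {x \<in> C. puncture c x = y} \<le> 2" .
  qed
  finally show ?thesis
    by simp
qed

section \<open>The Griesmer bound\<close>

fun griesmer_length :: "nat \<Rightarrow> nat \<Rightarrow> nat" where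
  "griesmer_length 0 d = 0"
| "griesmer_length (Suc k) d = d + griesmer_length k ((d + 1) div 2)"

lemma griesmer_length_mono: "d \<le> d' \<Longrightarrow> griesmer_length k d \<le> griesmer_length k d'"
proof (induction k arbitrary: d d')
  case 0
  then show ?case
    by simp
next
  case (Suc k)
  then have "griesmer_length k ((d + 1) div 2) \<le> griesmer_length k ((d' + 1) div 2)"
    by (simp add: div_le_mono)
  with Suc.prems show ?case
    by simp
qed

lemma griesmer_length_Suc_strict_mono:
  "d < d' \<Longrightarrow> griesmer_length (Suc k) d < griesmer_length (Suc k) d'"
  using griesmer_length_mono[of "(d + 1) div 2" "(d' + 1) div 2" k] by (simp add: div_le_mono)

lemma ceiling_divide_Suc_power:
  "nat \<lceil>real d / 2 ^ Suc i\<rceil> = nat \<lceil>real ((d + 1) div 2) / 2 ^ i\<rceil>"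
proof -
  have ceiling_eq: "\<lceil>real m / 2 ^ j\<rceil> = - (- int m div 2 ^ j)" for m j
    using ceiling_divide_eq_div[of "int m" "2 ^ j"] by simp
  have "- int d div 2 = - int ((d + 1) div 2)"
    by linarith
  then have "- int d div 2 ^ Suc i = - int ((d + 1) div 2) div 2 ^ i"
    by (simp add: zdiv_zmult2_eq)
  then show ?thesis
    by (simp only: ceiling_eq)
qed

lemma griesmer_length_eq_sum: "griesmer_length k d = (\<Sum>i<k. nat \<lceil>real d / 2 ^ i\<rceil>)"
proof (induction k arbitrary: d)
  case 0
  then show ?case
    by simp
next
  case (Suc k)
  have "(\<Sum>i<Suc k. nat \<lceil>real d / 2 ^ i\<rceil>) = d + (\<Sum>i<k. nat \<lceil>real d / 2 ^ Suc i\<rceil>)"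
    by (subst sum.lessThan_Suc_shift) simp
  also have "\<dots> = d + (\<Sum>i<k. nat \<lceil>real ((d + 1) div 2) / 2 ^ i\<rceil>)"
    by (simp only: ceiling_divide_Suc_power)
  finally show ?case
    by (simp add: Suc.IH)
qed

context
  fixes V :: "(bit ^ 'n) set" and c :: "bit ^ 'n"
  assumes subspace: "vec.subspace V"
    and c: "c \<in> V" "c \<noteq> 0"
    and c_min: "\<And>x. x \<in> V \<Longrightarrow> x \<noteq> 0 \<Longrightarrow> hamming_weight c \<le> hamming_weight x"
begin

lemma min_weight_kernel:
  assumes "z \<in> V" "support z \<subseteq> support c"
  shows "z = 0 \<or> z = c"
proof (rule ccontr)
  assume "\<not> (z = 0 \<or> z = c)"
  moreover have "z + c \<in> V"
    using subspace assms(1) c(1) by (simp add: subspace_bit_iff)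
  ultimately have "hamming_weight c \<le> hamming_weight z" "hamming_weight c \<le> hamming_weight (z + c)"
    using c_min assms(1) by (auto simp: bit_vec_add_eq_0_iff)
  moreover have "hamming_weight z + hamming_weight (z + c) = hamming_weight c"
    using hamming_weight_add_puncture[of z c] assms(2) by (simp add: puncture_eq_0_iff)
  moreover have "0 < hamming_weight c"
    using c(2) by simp
  ultimately show False
    by linarith
qed

lemma min_weight_residual_weight:
  assumes "y \<in> residual_code V c" "y \<noteq> 0"
  shows "hamming_weight c \<le> 2 * hamming_weight y"
proof -
  obtain x where x: "x \<in> V" "y = puncture c x"
    using assms(1) by (auto simp: residual_code_def)
  then have "x \<noteq> 0" "x + c \<noteq> 0"
    using assms(2) puncture_neq_0_imp by blast+
  moreover have "x + c \<in> V"
    using subspace c(1) x(1) by (simp add: subspace_bit_iff)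
  ultimately have "hamming_weight c \<le> hamming_weight x" "hamming_weight c \<le> hamming_weight (x + c)"
    using c_min x(1) by blast+
  then show ?thesis
    using hamming_weight_add_puncture[of x c] unfolding x(2) by linarith
qed

end

lemma griesmer_bound:
  fixes V :: "(bit ^ 'n) set" and T :: "'n set"
  assumes "vec.subspace V" "2 ^ k \<le> card V"
    and "\<And>x. x \<in> V \<Longrightarrow> support x \<subseteq> T"
    and "\<And>x. x \<in> V \<Longrightarrow> x \<noteq> 0 \<Longrightarrow> d \<le> hamming_weight x"
  shows "griesmer_length k d \<le> card T"
  using assms
proof (induction k arbitrary: V T d)
  case 0
  then show ?case
    by simp
next
  case (Suc k)
  have "2 \<le> card V"
    using Suc.prems(2) order_trans[of 2 "2 * 2 ^ k" "card V"] by simp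
  then obtain x where "x \<in> V" "x \<noteq> 0"
    using card_mono[of "{0}" V] by fastforce
  then obtain c where c: "c \<in> V" "c \<noteq> 0"
    and c_min: "\<And>x. x \<in> V \<Longrightarrow> x \<noteq> 0 \<Longrightarrow> hamming_weight c \<le> hamming_weight x"
    using ex_has_least_nat[of "\<lambda>x. x \<in> V \<and> x \<noteq> 0" x hamming_weight] by blast
  have "card V \<le> 2 * card (residual_code V c)"
    using Suc.prems(1) c(1) min_weight_kernel[OF Suc.prems(1) c c_min]
    by (rule card_le_twice_card_residual_code)
  have "griesmer_length k ((d + 1) div 2) \<le> card (T - support c)"
  proof (rule Suc.IH)
    show "vec.subspace (residual_code V c)"
      using Suc.prems(1) by (rule subspace_residual_code)
    show "2 ^ k \<le> card (residual_code V c)"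
      using \<open>card V \<le> 2 * card (residual_code V c)\<close> Suc.prems(2) by simp
  next
    fix y assume "y \<in> residual_code V c"
    then show "support y \<subseteq> T - support c"
      using Suc.prems(3) by (fastforce simp: residual_code_def support_puncture)
  next
    fix y assume "y \<in> residual_code V c" "y \<noteq> 0"
    then show "(d + 1) div 2 \<le> hamming_weight y"
      using min_weight_residual_weight[OF Suc.prems(1) c c_min] Suc.prems(4)[OF c]
      by (fastforce simp: half_le_iff_le_double)
  qed
  moreover have "card (T - support c) = card T - hamming_weight c"
    using Suc.prems(3)[OF c(1)] by (simp add: card_Diff_subset hamming_weight_eq_card_support)
  moreover have "hamming_weight c \<le> card T"
    using Suc.prems(3)[OF c(1)] by (simp add: card_mono hamming_weight_eq_card_support)
  ultimately show ?case
    using Suc.prems(4)[OF c] by simp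
qed

lemma self_orthogonal_even_weight_puncture:
  assumes "self_orthogonal C" "x \<in> C" "c \<in> C"
  shows "even (hamming_weight (puncture c x))"
  using hamming_weight_puncture[of c x] self_orthogonal_even_weight[OF assms(1,2)]
    self_orthogonal_even_intersection[OF assms]
  by (metis even_add)

context
  fixes C :: "(bit ^ 'n) set" and c :: "bit ^ 'n"
  assumes subspace: "vec.subspace C"
    and self_orthogonal: "self_orthogonal C"
    and c: "c \<in> C" "hamming_weight c mod 4 = 2"
    and c_min: "\<And>x. x \<in> C \<Longrightarrow> hamming_weight x mod 4 = 2 \<Longrightarrow> hamming_weight c \<le> hamming_weight x"
begin

lemma min_singly_even_kernel:
  assumes "z \<in> C" "support z \<subseteq> support c"
  shows "z = 0 \<or> z = c"
proof (rule ccontr)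
  assume "\<not> (z = 0 \<or> z = c)"
  then have "0 < hamming_weight z" "0 < hamming_weight (z + c)"
    by (auto simp: bit_vec_add_eq_0_iff)
  moreover have "z + c \<in> C"
    using subspace assms(1) c(1) by (simp add: subspace_bit_iff)
  then have "hamming_weight c \<le> hamming_weight z \<or> hamming_weight c \<le> hamming_weight (z + c)"
    using self_orthogonal_singly_even_add[OF self_orthogonal assms(1) c] c_min assms(1) by blast
  moreover have "hamming_weight z + hamming_weight (z + c) = hamming_weight c"
    using hamming_weight_add_puncture[of z c] assms(2) by (simp add: puncture_eq_0_iff)
  ultimately show False
    by linarith
qed

lemma min_singly_even_residual_weight:
  assumes min_weight: "\<And>x. x \<in> C \<Longrightarrow> x \<noteq> 0 \<Longrightarrow> D \<le> hamming_weight x"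
    and "y \<in> residual_code C c" "y \<noteq> 0"
  shows "(D + 1) div 2 + (if hamming_weight c = D then 1 else 0) \<le> hamming_weight y"
proof -
  obtain x where x: "x \<in> C" "y = puncture c x"
    using assms(2) by (auto simp: residual_code_def)
  then have "x \<noteq> 0" "x + c \<noteq> 0"
    using assms(3) puncture_neq_0_imp by blast+
  moreover have "x + c \<in> C"
    using subspace c(1) x(1) by (simp add: subspace_bit_iff)
  ultimately have "hamming_weight c + D \<le> hamming_weight x + hamming_weight (x + c)"
    using self_orthogonal_singly_even_add[OF self_orthogonal x(1) c] c_min min_weight x(1)
    by (metis add.commute add_mono)
  then have ge: "D \<le> 2 * hamming_weight y"
    using hamming_weight_add_puncture[of x c] unfolding x(2) by linarith
  have "4 dvd 2 * hamming_weight y"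
    using self_orthogonal_even_weight_puncture[OF self_orthogonal x(1) c(1)] unfolding x(2)
    by (simp only: even_iff_four_dvd_double)
  with ge c(2) have "D < 2 * hamming_weight y" if "hamming_weight c = D"
    using that by (cases "D = 2 * hamming_weight y") auto
  moreover have "even D" if "hamming_weight c = D"
    using self_orthogonal_even_weight[OF self_orthogonal c(1)] that by simp
  ultimately show ?thesis
    using ge by (auto simp: half_le_iff_le_double even_half_lt_iff_lt_double Suc_le_eq)
qed

lemma min_singly_even_contradicts_griesmer:
  assumes "2 \<le> k" "2 ^ k \<le> card C"
    and min_weight: "\<And>x. x \<in> C \<Longrightarrow> x \<noteq> 0 \<Longrightarrow> D \<le> hamming_weight x"
    and length: "CARD('n) \<le> griesmer_length k D"
  shows False
proof -
  obtain j where k: "k = Suc (Suc j)"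
    using assms(1) by (metis add_2_eq_Suc le_Suc_ex)
  let ?R = "residual_code C c"
  define d where "d = (D + 1) div 2 + (if hamming_weight c = D then 1 else 0)"
  have residual_bound: "griesmer_length (Suc j) d \<le> card (UNIV - support c)"
  proof (rule griesmer_bound)
    show "vec.subspace ?R"
      using subspace by (rule subspace_residual_code)
    have "card C \<le> 2 * card ?R"
      using subspace c(1) min_singly_even_kernel by (rule card_le_twice_card_residual_code)
    then show "2 ^ Suc j \<le> card ?R"
      using assms(2) k by simp
  next
    fix y assume "y \<in> ?R"
    then show "support y \<subseteq> UNIV - support c"
      by (auto simp: residual_code_def support_puncture)
    assume "y \<noteq> 0"
    with \<open>y \<in> ?R\<close> show "d \<le> hamming_weight y"
      using min_singly_even_residual_weight[OF min_weight] by (simp add: d_def)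
  qed
  have "card (UNIV - support c) = CARD('n) - hamming_weight c"
    by (simp add: hamming_weight_eq_card_support card_Diff_subset)
  moreover have "hamming_weight c \<le> CARD('n)"
    by (simp add: hamming_weight_eq_card_support card_mono)
  ultimately have "griesmer_length (Suc j) d + hamming_weight c \<le> D + griesmer_length (Suc j) ((D + 1) div 2)"
    using residual_bound length griesmer_length.simps(2)[of "Suc j" D] unfolding k by linarith
  moreover have "D \<le> hamming_weight c"
    using min_weight[OF c(1)] c(2) by fastforce
  moreover have "griesmer_length (Suc j) ((D + 1) div 2) < griesmer_length (Suc j) ((D + 1) div 2 + 1)"
    by (rule griesmer_length_Suc_strict_mono) simp
  ultimately show False
    unfolding d_def by (cases "hamming_weight c = D") simp_all
qed

end

theorem self_orthogonal_griesmer_imp_doubly_even: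
  fixes C :: "(bit ^ 'n) set"
  assumes "vec.subspace C" "self_orthogonal C" "2 \<le> k" "2 ^ k \<le> card C"
    and "\<And>x. x \<in> C \<Longrightarrow> x \<noteq> 0 \<Longrightarrow> D \<le> hamming_weight x"
    and "CARD('n) \<le> griesmer_length k D"
  shows "doubly_even C"
proof (rule ccontr)
  assume "\<not> doubly_even C"
  then obtain x where "x \<in> C" "\<not> 4 dvd hamming_weight x"
    by (auto simp: doubly_even_def)
  then have "x \<in> C \<and> hamming_weight x mod 4 = 2"
    using even_mod_four_cases[OF self_orthogonal_even_weight[OF assms(2)]] by fastforce
  then obtain c where "c \<in> C" "hamming_weight c mod 4 = 2"
    and "\<And>y. y \<in> C \<Longrightarrow> hamming_weight y mod 4 = 2 \<Longrightarrow> hamming_weight c \<le> hamming_weight y"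
    using ex_has_least_nat[of "\<lambda>x. x \<in> C \<and> hamming_weight x mod 4 = 2" x hamming_weight] by blast
  then show False
    using min_singly_even_contradicts_griesmer assms by blast
qed

theorem proposition3p8:
  fixes C :: "(bit ^ 'n) set" and N k D :: nat
  assumes "k \<ge> 3"
    and "is_NkD_code C N k D"
    and "griesmer N k D"
  shows "self_orthogonal C \<longleftrightarrow> doubly_even C"
proof -
  from assms(2) have subspace: "vec.subspace C" and "N = CARD('n)" "vec.dim C = k" "min_distance C = D"
    by (auto simp: is_NkD_code_def binary_linear_code_def code_dim_def)
  then have "card C = 2 ^ k"
    by (simp add: card_subspace)
  moreover have "D \<le> hamming_weight x" if "x \<in> C" "x \<noteq> 0" for x
    using min_distance_le_hamming_weight[OF vec.subspace_0[OF subspace] that] \<open>min_distance C = D\<close> by simp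
  moreover have "CARD('n) = griesmer_length k D"
    using assms(3) \<open>N = CARD('n)\<close> by (simp add: griesmer_def griesmer_length_eq_sum)
  moreover have "2 \<le> k"
    using assms(1) by simp
  ultimately show ?thesis
    using subspace doubly_even_imp_self_orthogonal self_orthogonal_griesmer_imp_doubly_even[of C k D]
    by auto
qed

end
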